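(* Let $(B,\|\cdot\|)$ be a real separable Banach space, let $X, X_1, X_2, \ldots$ be i.i.d. $B$-valued random variables with mean zero and $S_n=\sum_{i=1}^nX_i$. Let $\{c_n\}$ be a sequence of positive real numbers such that $c_n/\sqrt n$ is non-decreasing and tends to $\infty$, and such that for every $\epsilon>0$ there exists $m_\epsilon\ge1$ with $c_n/c_m\le(1+\epsilon)(n/m)$ whenever $m_\epsilon\le m<n$. Assume $\sum_{n=1}^\infty\mathbb{P}\{\|X\|\ge c_n\}<\infty$. Then: (a) $\{S_n/c_n;\ n\ge1\}$ is bounded in probability if and only if $\limsup_{n\to\infty}\mathbb{E}\|S_n\|/c_n<\infty$; (b) $S_n/c_n\to0$ in probability if and only if $\mathbb{E}\|S_n\|/c_n\to0$. *)

theory Defs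
  imports "HOL-Probability.Probability"
begin

definition partial_sum :: "(nat \<Rightarrow> 'a \<Rightarrow> 'b::real_normed_vector) \<Rightarrow> nat \<Rightarrow> 'a \<Rightarrow> 'b" where
  "partial_sum Xs n = (\<lambda>\<omega>. \<Sum>i\<in>{1..n}. Xs i \<omega>)"

definition bounded_in_prob :: "'a measure \<Rightarrow> (nat \<Rightarrow> 'a \<Rightarrow> 'b::real_normed_vector) \<Rightarrow> bool" where
  "bounded_in_prob M Y \<longleftrightarrow>
     (\<forall>\<epsilon>>0. \<exists>K. \<forall>n\<ge>1. measure M {\<omega>\<in>space M. norm (Y n \<omega>) > K} \<le> \<epsilon>)"

definition tendsto_zero_in_prob :: "'a measure \<Rightarrow> (nat \<Rightarrow> 'a \<Rightarrow> 'b::real_normed_vector) \<Rightarrow> bool" where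
  "tendsto_zero_in_prob M Y \<longleftrightarrow>
     (\<forall>\<epsilon>>0. (\<lambda>n. measure M {\<omega>\<in>space M. norm (Y n \<omega>) > \<epsilon>}) \<longlonglongrightarrow> 0)"

end

(*
  Markov's inequality gives the two implications from the expectations to the probabilities.
  Conversely, suppose P(|S_k| > K) <= 1/32 for all k <= n. Splitting the event
  {max_{k<=n} |S_k| > a} according to the first index at which |S_k| exceeds a makes it a
  disjoint union of events that depend only on X_1, ..., X_k and are therefore independent
  of the later increments. This yields Ottaviani's inequality, which bounds
  P(max_{k<=n} |S_k| > 4K) by 1/8, and the Hoffmann-Jorgensen inequality
  P(max |S_k| > 3t + s) <= P(max |S_k| > t)^2 + P(W > s) for any W dominating the |X_i|.
  Integrating the latter over the levels gives E|S_n| <= 32 K + 8 E W, and with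
  W = r + sum_i |X_i| 1{|X_i| > r} and K = r = delta c_n one gets
  E|S_n| / c_n <= 40 delta + 8 n E(|X|; |X| > delta c_n) / c_n.
  The last term tends to 0 by dominated convergence: the growth conditions on c bound
  n y / c_n on {y > delta c_n} by a multiple of #{k. c_k <= y}, whose expectation at |X|
  is the convergent series sum_k P(|X| >= c_k).
*)
theory Submission
  imports Defs
begin

section \<open>Layer-cake formula\<close>

lemma nn_integral_layer_cake:
  assumes "sigma_finite_measure M"
    and [measurable]: "Z \<in> borel_measurable M"
  shows "(\<integral>\<^sup>+x. ennreal (Z x) \<partial>M) =
         (\<integral>\<^sup>+u. emeasure M {x\<in>space M. u < Z x} * indicator {0..} u \<partial>lborel)"
proof -
  interpret M: sigma_finite_measure M by fact
  interpret pair_sigma_finite M lborel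
    by (intro pair_sigma_finite.intro M.sigma_finite_measure_axioms lborel.sigma_finite_measure_axioms)
  define A where "A = {(x, u). 0 \<le> u \<and> u < Z x}"
  have "indicator A \<in> borel_measurable (M \<Otimes>\<^sub>M lborel)"
  proof -
    have "A \<inter> space (M \<Otimes>\<^sub>M lborel) \<in> sets (M \<Otimes>\<^sub>M lborel)"
      unfolding A_def by measurable
    then show ?thesis
      by (rule borel_measurable_indicator[THEN measurable_cong[THEN iffD1, rotated]])
         (auto simp: indicator_def space_pair_measure)
  qed
  have "(\<integral>\<^sup>+x. ennreal (Z x) \<partial>M) = (\<integral>\<^sup>+x. (\<integral>\<^sup>+u. indicator A (x, u) \<partial>lborel) \<partial>M)"
  proof (rule nn_integral_cong)
    fix x
    have "(\<lambda>u. indicator A (x, u) :: ennreal) = indicator {0..<Z x}"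
      by (auto simp: A_def indicator_def fun_eq_iff)
    then show "ennreal (Z x) = (\<integral>\<^sup>+u. indicator A (x, u) \<partial>lborel)"
      by (cases "0 \<le> Z x") (auto simp: ennreal_neg)
  qed
  also have "\<dots> = (\<integral>\<^sup>+u. (\<integral>\<^sup>+x. indicator A (x, u) \<partial>M) \<partial>lborel)"
    by (rule Fubini[symmetric]) fact
  also have "\<dots> = (\<integral>\<^sup>+u. emeasure M {x\<in>space M. u < Z x} * indicator {0..} u \<partial>lborel)"
  proof (rule nn_integral_cong)
    fix u :: real
    have "(\<integral>\<^sup>+x. indicator A (x, u) \<partial>M) =
          (\<integral>\<^sup>+x. indicator {x\<in>space M. u < Z x} x * indicator {0..} u \<partial>M)"
      by (intro nn_integral_cong) (auto simp: A_def indicator_def)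
    then show "(\<integral>\<^sup>+x. indicator A (x, u) \<partial>M) = emeasure M {x\<in>space M. u < Z x} * indicator {0..} u"
      by (simp add: nn_integral_multc)
  qed
  finally show ?thesis .
qed

lemma (in prob_space) borel_measurable_prob_gt[measurable]:
  fixes Z :: "'a \<Rightarrow> real"
  assumes [measurable]: "Z \<in> borel_measurable M"
  shows "(\<lambda>u. prob {\<omega>\<in>space M. u < Z \<omega>}) \<in> borel_measurable borel"
proof -
  have "mono (\<lambda>u. - prob {\<omega>\<in>space M. u < Z \<omega>})"
    by (auto simp: mono_def intro!: finite_measure_mono)
  then have "(\<lambda>u. - (- prob {\<omega>\<in>space M. u < Z \<omega>})) \<in> borel_measurable borel"
    using borel_measurable_mono borel_measurable_uminus by blast
  then show ?thesis by simp
qed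

lemma (in prob_space) nn_integral_layer_cake_prob:
  assumes [measurable]: "Z \<in> borel_measurable M"
  shows "(\<integral>\<^sup>+\<omega>. ennreal (Z \<omega>) \<partial>M) =
         (\<integral>\<^sup>+u. ennreal (prob {\<omega>\<in>space M. u < Z \<omega>} * indicator {0..} u) \<partial>lborel)"
  unfolding nn_integral_layer_cake[OF sigma_finite_measure_axioms assms]
  by (intro nn_integral_cong) (auto simp: emeasure_eq_measure indicator_def)

section \<open>Maximal inequalities for sums of independent random vectors\<close>

definition first_exceeds :: "real \<Rightarrow> nat \<Rightarrow> (nat \<Rightarrow> 'b::real_normed_vector) \<Rightarrow> bool" where
  "first_exceeds a k x \<longleftrightarrow>
     a < norm (\<Sum>i\<in>{1..k}. x i) \<and> (\<forall>j<k. norm (\<Sum>i\<in>{1..j}. x i) \<le> a)"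

lemma first_exceeds_unique: "first_exceeds a k x \<Longrightarrow> first_exceeds a l x \<Longrightarrow> k = l"
  unfolding first_exceeds_def by (metis linorder_neqE_nat not_le)

lemma first_exceeds_restrict: "first_exceeds a k (restrict x {1..k}) = first_exceeds a k x"
proof -
  have "(\<Sum>i\<in>{1..j}. restrict x {1..k} i) = (\<Sum>i\<in>{1..j}. x i)" if "j \<le> k" for j
    using that by (intro sum.cong) auto
  then show ?thesis
    unfolding first_exceeds_def by auto
qed

lemma borel_measurable_sum_components:
  assumes "J \<subseteq> I" "finite J"
  shows "(\<lambda>x. \<Sum>i\<in>J. x i) \<in> borel_measurable (PiM I (\<lambda>_. borel :: 'b::{banach, second_countable_topology} measure))"
  by (rule borel_measurable_sum) (rule measurable_component_singleton, use assms in auto)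

lemma measurable_first_exceeds:
  "first_exceeds a k \<in> measurable (PiM {1..k} (\<lambda>_. borel :: 'b::{banach, second_countable_topology} measure)) (count_space UNIV)"
proof -
  have "(\<lambda>x. norm (\<Sum>i\<in>{1..j}. x i)) \<in> borel_measurable (PiM {1..k} (\<lambda>_. borel :: 'b measure))"
    if "j \<le> k" for j
    using that by (intro borel_measurable_norm[THEN measurable_compose[rotated]] borel_measurable_sum_components) auto
  then have "Measurable.pred (PiM {1..k} (\<lambda>_. borel)) (\<lambda>x::nat \<Rightarrow> 'b. norm (\<Sum>i\<in>{1..j}. x i) \<le> a)"
    and "Measurable.pred (PiM {1..k} (\<lambda>_. borel)) (\<lambda>x::nat \<Rightarrow> 'b. a < norm (\<Sum>i\<in>{1..j}. x i))"
    if "j \<le> k" for j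
    using that by (auto intro: pred_le_const pred_const_less)
  then show ?thesis
    unfolding first_exceeds_def by (intro pred_intros_logic pred_intros_finite(3)) auto
qed

lemma partial_sum_0[simp]: "partial_sum Xs 0 \<omega> = 0"
  by (simp add: partial_sum_def)

lemma partial_sum_Suc: "partial_sum Xs (Suc k) \<omega> = partial_sum Xs k \<omega> + Xs (Suc k) \<omega>"
  by (simp add: partial_sum_def)

lemma partial_sum_diff:
  "k \<le> j \<Longrightarrow> partial_sum Xs j \<omega> - partial_sum Xs k \<omega> = (\<Sum>i\<in>{Suc k..j}. Xs i \<omega>)"
  by (induction j rule: dec_induct) (simp_all add: partial_sum_Suc)

lemma first_exceeds_partial_sum:
  "first_exceeds a k (\<lambda>i. Xs i \<omega>) \<longleftrightarrow>
     a < norm (partial_sum Xs k \<omega>) \<and> (\<forall>j<k. norm (partial_sum Xs j \<omega>) \<le> a)"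
  by (simp add: first_exceeds_def partial_sum_def)

locale indep_seq = prob_space M for M :: "'a measure" +
  fixes Xs :: "nat \<Rightarrow> 'a \<Rightarrow> 'b::{banach, second_countable_topology}"
  assumes Xs_measurable: "\<And>i. i \<ge> 1 \<Longrightarrow> Xs i \<in> borel_measurable M"
    and Xs_indep: "indep_vars (\<lambda>_. borel) Xs {1..}"
    and Xs_integrable: "\<And>i. i \<ge> 1 \<Longrightarrow> integrable M (Xs i)"
begin

lemma borel_measurable_partial_sum[measurable]: "partial_sum Xs k \<in> borel_measurable M"
  unfolding partial_sum_def by (intro borel_measurable_sum Xs_measurable) simp

lemma integrable_partial_sum: "integrable M (partial_sum Xs k)"
  unfolding partial_sum_def by (intro Bochner_Integration.integrable_sum Xs_integrable) simp

lemma pred_first_exceeds[measurable]: "Measurable.pred M (\<lambda>\<omega>. first_exceeds a k (\<lambda>i. Xs i \<omega>))"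
  unfolding first_exceeds_partial_sum by measurable

definition max_psum :: "nat \<Rightarrow> 'a \<Rightarrow> real" where
  "max_psum n \<omega> = Max ((\<lambda>k. norm (partial_sum Xs k \<omega>)) ` {..n})"

lemma borel_measurable_max_psum[measurable]: "max_psum n \<in> borel_measurable M"
  unfolding max_psum_def by measurable

lemma norm_partial_sum_le_max_psum: "k \<le> n \<Longrightarrow> norm (partial_sum Xs k \<omega>) \<le> max_psum n \<omega>"
  unfolding max_psum_def by (intro Max_ge) auto

lemma max_psum_nonneg: "0 \<le> max_psum n \<omega>"
  using norm_partial_sum_le_max_psum[of 0 n \<omega>] by simp

lemma integrable_max_psum: "integrable M (max_psum n)"
proof (rule Bochner_Integration.integrable_bound)
  show "integrable M (\<lambda>\<omega>. \<Sum>k\<le>n. norm (partial_sum Xs k \<omega>))"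
    by (intro Bochner_Integration.integrable_sum integrable_norm integrable_partial_sum)
  have "max_psum n \<omega> \<le> (\<Sum>k\<le>n. norm (partial_sum Xs k \<omega>))" for \<omega>
    unfolding max_psum_def by (rule Max.boundedI) (auto intro: member_le_sum)
  then show "AE \<omega> in M. norm (max_psum n \<omega>) \<le> norm (\<Sum>k\<le>n. norm (partial_sum Xs k \<omega>))"
    using max_psum_nonneg by (intro AE_I2) (auto intro: order_trans[OF _ abs_ge_self])
qed simp

lemma max_psum_gt_iff:
  assumes "0 \<le> a"
  shows "a < max_psum n \<omega> \<longleftrightarrow> (\<exists>k\<in>{1..n}. first_exceeds a k (\<lambda>i. Xs i \<omega>))"
proof
  assume "a < max_psum n \<omega>"
  then obtain k where k: "k \<le> n" "a < norm (partial_sum Xs k \<omega>)"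
    unfolding max_psum_def by (subst (asm) Max_gr_iff) auto
  define k0 where "k0 = (LEAST k. a < norm (partial_sum Xs k \<omega>))"
  have k0: "a < norm (partial_sum Xs k0 \<omega>)" "k0 \<le> k"
    unfolding k0_def using k by (auto intro: LeastI Least_le)
  moreover have "\<forall>j<k0. norm (partial_sum Xs j \<omega>) \<le> a"
    unfolding k0_def using not_less_Least by fastforce
  moreover have "k0 \<noteq> 0"
    using k0 assms by (metis partial_sum_0 norm_zero not_less)
  ultimately show "\<exists>k\<in>{1..n}. first_exceeds a k (\<lambda>i. Xs i \<omega>)"
    using k by (intro bexI[of _ k0]) (auto simp: first_exceeds_partial_sum)
next
  assume "\<exists>k\<in>{1..n}. first_exceeds a k (\<lambda>i. Xs i \<omega>)"
  then obtain k where "k \<le> n" "first_exceeds a k (\<lambda>i. Xs i \<omega>)"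
    by auto
  then show "a < max_psum n \<omega>"
    using norm_partial_sum_le_max_psum[of k n \<omega>] by (simp add: first_exceeds_partial_sum)
qed

lemma prob_max_psum_gt:
  assumes "0 \<le> a"
  shows "prob {\<omega>\<in>space M. a < max_psum n \<omega>} =
         (\<Sum>k\<in>{1..n}. prob {\<omega>\<in>space M. first_exceeds a k (\<lambda>i. Xs i \<omega>)})"
proof -
  have "{\<omega>\<in>space M. a < max_psum n \<omega>} =
        (\<Union>k\<in>{1..n}. {\<omega>\<in>space M. first_exceeds a k (\<lambda>i. Xs i \<omega>)})"
    using max_psum_gt_iff[OF assms] by auto
  also have "prob \<dots> = (\<Sum>k\<in>{1..n}. prob {\<omega>\<in>space M. first_exceeds a k (\<lambda>i. Xs i \<omega>)})"
    by (rule finite_measure_finite_Union) (auto simp: disjoint_family_on_def dest: first_exceeds_unique)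
  finally show ?thesis .
qed

lemma prob_first_exceeds_indep:
  assumes "Q \<in> measurable (PiM {Suc k..n} (\<lambda>_. borel)) (count_space UNIV)"
  shows "prob {\<omega>\<in>space M. first_exceeds a k (\<lambda>i. Xs i \<omega>) \<and> Q (restrict (\<lambda>i. Xs i \<omega>) {Suc k..n})} =
         prob {\<omega>\<in>space M. first_exceeds a k (\<lambda>i. Xs i \<omega>)} *
         prob {\<omega>\<in>space M. Q (restrict (\<lambda>i. Xs i \<omega>) {Suc k..n})}"
proof -
  have "indep_var (PiM {1..k} (\<lambda>_. borel)) (\<lambda>\<omega>. restrict (\<lambda>i. Xs i \<omega>) {1..k})
                  (PiM {Suc k..n} (\<lambda>_. borel)) (\<lambda>\<omega>. restrict (\<lambda>i. Xs i \<omega>) {Suc k..n})"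
    by (rule indep_var_restrict[OF Xs_indep]) auto
  then have "indep_var (count_space UNIV) (first_exceeds a k \<circ> (\<lambda>\<omega>. restrict (\<lambda>i. Xs i \<omega>) {1..k}))
                  (count_space UNIV) (Q \<circ> (\<lambda>\<omega>. restrict (\<lambda>i. Xs i \<omega>) {Suc k..n}))"
    by (rule indep_var_compose) (rule measurable_first_exceeds, rule assms)
  from indep_varD[OF this, of "{True}" "{True}"] show ?thesis
    unfolding comp_def first_exceeds_restrict by (simp add: vimage_def Int_def conj_commute)
qed

lemma prob_first_exceeds_small_increment:
  assumes "k \<le> n"
  shows "prob {\<omega>\<in>space M. first_exceeds a k (\<lambda>i. Xs i \<omega>) \<and>
                         norm (partial_sum Xs n \<omega> - partial_sum Xs k \<omega>) \<le> b} =
         prob {\<omega>\<in>space M. first_exceeds a k (\<lambda>i. Xs i \<omega>)} *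
         prob {\<omega>\<in>space M. norm (partial_sum Xs n \<omega> - partial_sum Xs k \<omega>) \<le> b}"
proof -
  define Q where "Q y \<longleftrightarrow> norm (\<Sum>i\<in>{Suc k..n}. y i) \<le> b" for y :: "nat \<Rightarrow> 'b"
  have [measurable]: "(\<lambda>y. \<Sum>i\<in>{Suc k..n}. y i) \<in> borel_measurable (PiM {Suc k..n} (\<lambda>_. borel :: 'b measure))"
    by (rule borel_measurable_sum_components) auto
  have "Q \<in> measurable (PiM {Suc k..n} (\<lambda>_. borel)) (count_space UNIV)"
    unfolding Q_def by measurable
  moreover have "Q (restrict (\<lambda>i. Xs i \<omega>) {Suc k..n}) \<longleftrightarrow>
                 norm (partial_sum Xs n \<omega> - partial_sum Xs k \<omega>) \<le> b" for \<omega>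
    unfolding Q_def using assms by (simp add: partial_sum_diff)
  ultimately show ?thesis
    using prob_first_exceeds_indep[of Q k n a] by simp
qed

lemma prob_first_exceeds_later_jump:
  "prob {\<omega>\<in>space M. first_exceeds a k (\<lambda>i. Xs i \<omega>) \<and>
                    (\<exists>j\<in>{k..n}. b < norm (partial_sum Xs j \<omega> - partial_sum Xs k \<omega>))} =
   prob {\<omega>\<in>space M. first_exceeds a k (\<lambda>i. Xs i \<omega>)} *
   prob {\<omega>\<in>space M. \<exists>j\<in>{k..n}. b < norm (partial_sum Xs j \<omega> - partial_sum Xs k \<omega>)}"
proof -
  define Q where "Q y \<longleftrightarrow> (\<exists>j\<in>{k..n}. b < norm (\<Sum>i\<in>{Suc k..j}. y i))" for y :: "nat \<Rightarrow> 'b"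
  have "Measurable.pred (PiM {Suc k..n} (\<lambda>_. borel)) (\<lambda>y::nat \<Rightarrow> 'b. b < norm (\<Sum>i\<in>{Suc k..j}. y i))"
    if "j \<in> {k..n}" for j
    using that
    by (intro pred_const_less[OF measurable_compose[OF borel_measurable_sum_components borel_measurable_norm]])
       auto
  then have "Q \<in> measurable (PiM {Suc k..n} (\<lambda>_. borel)) (count_space UNIV)"
    unfolding Q_def by (intro pred_intros_finite(4)) auto
  moreover have "Q (restrict (\<lambda>i. Xs i \<omega>) {Suc k..n}) \<longleftrightarrow>
                 (\<exists>j\<in>{k..n}. b < norm (partial_sum Xs j \<omega> - partial_sum Xs k \<omega>))" for \<omega>
    unfolding Q_def by (auto simp: partial_sum_diff)
  ultimately show ?thesis
    using prob_first_exceeds_indep[of Q k n a] by simp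
qed

lemma ottaviani_inequality:
  assumes "0 \<le> a" "0 \<le> b"
    and \<beta>: "\<And>k. k \<in> {1..n} \<Longrightarrow>
           prob {\<omega>\<in>space M. b < norm (partial_sum Xs n \<omega> - partial_sum Xs k \<omega>)} \<le> \<beta>"
  shows "(1 - \<beta>) * prob {\<omega>\<in>space M. a + b < max_psum n \<omega>} \<le>
         prob {\<omega>\<in>space M. a < norm (partial_sum Xs n \<omega>)}"
proof -
  define F where "F k = {\<omega>\<in>space M. first_exceeds (a + b) k (\<lambda>i. Xs i \<omega>) \<and>
                          norm (partial_sum Xs n \<omega> - partial_sum Xs k \<omega>) \<le> b}" for k
  have F_bound: "(1 - \<beta>) * prob {\<omega>\<in>space M. first_exceeds (a + b) k (\<lambda>i. Xs i \<omega>)} \<le> prob (F k)"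
    if k: "k \<in> {1..n}" for k
  proof -
    have "{\<omega>\<in>space M. norm (partial_sum Xs n \<omega> - partial_sum Xs k \<omega>) \<le> b} =
          space M - {\<omega>\<in>space M. b < norm (partial_sum Xs n \<omega> - partial_sum Xs k \<omega>)}"
      by auto
    then have "1 - \<beta> \<le> prob {\<omega>\<in>space M. norm (partial_sum Xs n \<omega> - partial_sum Xs k \<omega>) \<le> b}"
      using \<beta>[OF k] by (simp add: prob_compl)
    moreover have "k \<le> n"
      using k by simp
    ultimately show ?thesis
      unfolding F_def prob_first_exceeds_small_increment[OF \<open>k \<le> n\<close>] mult.commute[of "1 - \<beta>"]
      by (intro mult_left_mono) auto
  qed
  have "(1 - \<beta>) * prob {\<omega>\<in>space M. a + b < max_psum n \<omega>} =
        (\<Sum>k\<in>{1..n}. (1 - \<beta>) * prob {\<omega>\<in>space M. first_exceeds (a + b) k (\<lambda>i. Xs i \<omega>)})"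
    using assms by (simp add: prob_max_psum_gt sum_distrib_left)
  also have "\<dots> \<le> (\<Sum>k\<in>{1..n}. prob (F k))"
    by (intro sum_mono F_bound)
  also have "\<dots> = prob (\<Union>k\<in>{1..n}. F k)"
    unfolding F_def
    by (rule finite_measure_finite_Union[symmetric]) (auto simp: disjoint_family_on_def dest: first_exceeds_unique)
  also have "\<dots> \<le> prob {\<omega>\<in>space M. a < norm (partial_sum Xs n \<omega>)}"
  proof (rule finite_measure_mono)
    show "(\<Union>k\<in>{1..n}. F k) \<subseteq> {\<omega>\<in>space M. a < norm (partial_sum Xs n \<omega>)}"
    proof safe
      fix \<omega> k assume "k \<in> {1..n}" "\<omega> \<in> F k"
      moreover have "norm (partial_sum Xs k \<omega>) \<le>
          norm (partial_sum Xs n \<omega>) + norm (partial_sum Xs n \<omega> - partial_sum Xs k \<omega>)"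
        using norm_triangle_ineq4[of "partial_sum Xs n \<omega>" "partial_sum Xs n \<omega> - partial_sum Xs k \<omega>"]
        by simp
      ultimately show "\<omega> \<in> space M" "a < norm (partial_sum Xs n \<omega>)"
        by (auto simp: F_def first_exceeds_partial_sum)
    qed
  qed simp
  finally show ?thesis .
qed

lemma max_psum_large_jump:
  assumes "0 \<le> t" "0 \<le> s" "3 * t + s < max_psum n \<omega>"
    and small_steps: "\<And>i. i \<in> {1..n} \<Longrightarrow> norm (Xs i \<omega>) \<le> s"
  obtains k j where "k \<in> {1..n}" "first_exceeds t k (\<lambda>i. Xs i \<omega>)" "j \<in> {k..n}"
    "2 * t < norm (partial_sum Xs j \<omega> - partial_sum Xs k \<omega>)"
proof -
  obtain k where k: "k \<in> {1..n}" "first_exceeds t k (\<lambda>i. Xs i \<omega>)"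
    using max_psum_gt_iff[of t n \<omega>] assms by auto
  obtain j where j: "j \<le> n" "3 * t + s < norm (partial_sum Xs j \<omega>)"
    using assms(3) unfolding max_psum_def by (subst (asm) Max_gr_iff) auto
  have "k \<le> j"
  proof (rule ccontr)
    assume "\<not> k \<le> j"
    then have "norm (partial_sum Xs j \<omega>) \<le> t"
      using k(2) by (simp add: first_exceeds_partial_sum)
    then show False
      using j assms(1,2) by linarith
  qed
  obtain k' where k': "k = Suc k'"
    using k by (cases k) auto
  have "norm (partial_sum Xs j \<omega>) \<le>
        norm (partial_sum Xs k' \<omega>) + norm (Xs k \<omega>) + norm (partial_sum Xs j \<omega> - partial_sum Xs k \<omega>)"
    using norm_triangle_ineq[of "partial_sum Xs k' \<omega> + Xs k \<omega>" "partial_sum Xs j \<omega> - partial_sum Xs k \<omega>"]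
      norm_triangle_ineq[of "partial_sum Xs k' \<omega>" "Xs k \<omega>"]
    by (simp add: k' partial_sum_Suc)
  moreover have "norm (partial_sum Xs k' \<omega>) \<le> t"
    using k(2) k' by (simp add: first_exceeds_partial_sum)
  ultimately have "2 * t < norm (partial_sum Xs j \<omega> - partial_sum Xs k \<omega>)"
    using small_steps[OF k(1)] j by linarith
  with k j \<open>k \<le> j\<close> show ?thesis
    using that by auto
qed

lemma hoffmann_jorgensen_inequality:
  assumes "0 \<le> t" "0 \<le> s"
    and [measurable]: "W \<in> borel_measurable M"
    and W_dominates: "\<And>\<omega> i. \<omega> \<in> space M \<Longrightarrow> i \<in> {1..n} \<Longrightarrow> norm (Xs i \<omega>) \<le> W \<omega>"
  shows "prob {\<omega>\<in>space M. 3 * t + s < max_psum n \<omega>} \<le>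
         (prob {\<omega>\<in>space M. t < max_psum n \<omega>})\<^sup>2 + prob {\<omega>\<in>space M. s < W \<omega>}"
proof -
  define J where "J k = {\<omega>\<in>space M. \<exists>j\<in>{k..n}. 2 * t < norm (partial_sum Xs j \<omega> - partial_sum Xs k \<omega>)}" for k
  have J_events[measurable]: "J k \<in> events" for k
    unfolding J_def by measurable
  have prob_J: "prob (J k) \<le> prob {\<omega>\<in>space M. t < max_psum n \<omega>}" for k
  proof (rule finite_measure_mono)
    show "J k \<subseteq> {\<omega>\<in>space M. t < max_psum n \<omega>}"
    proof
      fix \<omega> assume "\<omega> \<in> J k"
      then obtain j where "\<omega> \<in> space M" "j \<in> {k..n}"
        and j: "2 * t < norm (partial_sum Xs j \<omega> - partial_sum Xs k \<omega>)"
        unfolding J_def by auto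
      moreover have "norm (partial_sum Xs j \<omega> - partial_sum Xs k \<omega>) \<le>
                     norm (partial_sum Xs j \<omega>) + norm (partial_sum Xs k \<omega>)"
        by (rule norm_triangle_ineq4)
      moreover have "norm (partial_sum Xs j \<omega>) \<le> max_psum n \<omega>" "norm (partial_sum Xs k \<omega>) \<le> max_psum n \<omega>"
        using \<open>j \<in> {k..n}\<close> by (auto intro: norm_partial_sum_le_max_psum)
      ultimately show "\<omega> \<in> {\<omega>\<in>space M. t < max_psum n \<omega>}"
        by simp
    qed
  qed simp
  have "{\<omega>\<in>space M. 3 * t + s < max_psum n \<omega>} \<subseteq>
        {\<omega>\<in>space M. s < W \<omega>} \<union> (\<Union>k\<in>{1..n}. {\<omega>\<in>space M. first_exceeds t k (\<lambda>i. Xs i \<omega>)} \<inter> J k)"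
  proof
    fix \<omega> assume \<omega>: "\<omega> \<in> {\<omega>\<in>space M. 3 * t + s < max_psum n \<omega>}"
    show "\<omega> \<in> {\<omega>\<in>space M. s < W \<omega>} \<union> (\<Union>k\<in>{1..n}. {\<omega>\<in>space M. first_exceeds t k (\<lambda>i. Xs i \<omega>)} \<inter> J k)"
    proof (cases "s < W \<omega>")
      case False
      then have "norm (Xs i \<omega>) \<le> s" if "i \<in> {1..n}" for i
        using W_dominates[of \<omega> i] \<omega> that by force
      with \<omega> obtain k j where "k \<in> {1..n}" "first_exceeds t k (\<lambda>i. Xs i \<omega>)" "j \<in> {k..n}"
        "2 * t < norm (partial_sum Xs j \<omega> - partial_sum Xs k \<omega>)"
        using max_psum_large_jump[OF assms(1,2)] by blast
      with \<omega> show ?thesis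
        unfolding J_def by blast
    qed (use \<omega> in simp)
  qed
  then have "prob {\<omega>\<in>space M. 3 * t + s < max_psum n \<omega>} \<le>
      prob {\<omega>\<in>space M. s < W \<omega>} + prob (\<Union>k\<in>{1..n}. {\<omega>\<in>space M. first_exceeds t k (\<lambda>i. Xs i \<omega>)} \<inter> J k)"
    by (intro order_trans[OF finite_measure_mono measure_subadditive]) simp_all
  also have "prob (\<Union>k\<in>{1..n}. {\<omega>\<in>space M. first_exceeds t k (\<lambda>i. Xs i \<omega>)} \<inter> J k) \<le>
      (\<Sum>k\<in>{1..n}. prob ({\<omega>\<in>space M. first_exceeds t k (\<lambda>i. Xs i \<omega>)} \<inter> J k))"
    by (rule finite_measure_subadditive_finite) auto
  also have "\<dots> = (\<Sum>k\<in>{1..n}. prob {\<omega>\<in>space M. first_exceeds t k (\<lambda>i. Xs i \<omega>)} * prob (J k))"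
  proof (intro sum.cong refl)
    fix k
    have "{\<omega>\<in>space M. first_exceeds t k (\<lambda>i. Xs i \<omega>)} \<inter> J k =
          {\<omega>\<in>space M. first_exceeds t k (\<lambda>i. Xs i \<omega>) \<and>
                      (\<exists>j\<in>{k..n}. 2 * t < norm (partial_sum Xs j \<omega> - partial_sum Xs k \<omega>))}"
      unfolding J_def by blast
    then show "prob ({\<omega>\<in>space M. first_exceeds t k (\<lambda>i. Xs i \<omega>)} \<inter> J k) =
               prob {\<omega>\<in>space M. first_exceeds t k (\<lambda>i. Xs i \<omega>)} * prob (J k)"
      unfolding J_def by (simp only: prob_first_exceeds_later_jump)
  qed
  also have "\<dots> \<le> (\<Sum>k\<in>{1..n}. prob {\<omega>\<in>space M. first_exceeds t k (\<lambda>i. Xs i \<omega>)} * prob {\<omega>\<in>space M. t < max_psum n \<omega>})"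
    by (intro sum_mono mult_left_mono prob_J) auto
  also have "\<dots> = (prob {\<omega>\<in>space M. t < max_psum n \<omega>})\<^sup>2"
    using assms(1) by (simp add: prob_max_psum_gt sum_distrib_right power2_eq_square)
  finally show ?thesis
    by simp
qed

lemma prob_norm_partial_sum_gt_le:
  assumes "0 < a"
  shows "prob {\<omega>\<in>space M. a < norm (partial_sum Xs k \<omega>)} \<le> expectation (\<lambda>\<omega>. norm (partial_sum Xs k \<omega>)) / a"
proof -
  have "prob {\<omega>\<in>space M. a < norm (partial_sum Xs k \<omega>)} \<le> prob {\<omega>\<in>space M. a \<le> norm (partial_sum Xs k \<omega>)}"
    by (intro finite_measure_mono) auto
  also have "\<dots> \<le> expectation (\<lambda>\<omega>. norm (partial_sum Xs k \<omega>)) / a"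
    using integrable_norm[OF integrable_partial_sum] assms
    by (intro integral_Markov_inequality_measure[where A = "space M"]) auto
  finally show ?thesis .
qed

lemma prob_quarter_max_psum_gt_le:
  assumes "0 \<le> t" and small: "prob {\<omega>\<in>space M. t < max_psum n \<omega>} \<le> 1/8" and "0 \<le> u"
    and "W \<in> borel_measurable M"
    and "\<And>\<omega> i. \<omega> \<in> space M \<Longrightarrow> i \<in> {1..n} \<Longrightarrow> norm (Xs i \<omega>) \<le> W \<omega>"
  shows "prob {\<omega>\<in>space M. u < max_psum n \<omega> / 4} \<le>
         indicator {..<t} u + prob {\<omega>\<in>space M. u < max_psum n \<omega>} / 8 + prob {\<omega>\<in>space M. u < W \<omega>}"
proof (cases "u < t")
  case True
  have "prob {\<omega>\<in>space M. u < max_psum n \<omega> / 4} \<le> 1"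
    by simp
  moreover have "0 \<le> prob {\<omega>\<in>space M. u < max_psum n \<omega>}" "0 \<le> prob {\<omega>\<in>space M. u < W \<omega>}"
    by simp_all
  moreover have "indicator {..<t} u = (1::real)"
    using True by simp
  ultimately show ?thesis
    by linarith
next
  case False
  let ?p = "prob {\<omega>\<in>space M. u < max_psum n \<omega>}"
  have "?p \<le> prob {\<omega>\<in>space M. t < max_psum n \<omega>}"
    using False by (intro finite_measure_mono) auto
  then have "?p\<^sup>2 \<le> ?p / 8"
    using small by (simp add: power2_eq_square mult_left_mono[of _ "1/8" ?p, simplified])
  moreover have "{\<omega>\<in>space M. u < max_psum n \<omega> / 4} = {\<omega>\<in>space M. 3 * u + u < max_psum n \<omega>}"
    by auto
  ultimately show ?thesis
    using hoffmann_jorgensen_inequality[of u u W n] assms False by simp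
qed

lemma expectation_max_psum_le:
  assumes "0 \<le> t" and small: "prob {\<omega>\<in>space M. t < max_psum n \<omega>} \<le> 1/8"
    and [measurable]: "W \<in> borel_measurable M" and "integrable M W" and W_nonneg: "\<And>\<omega>. 0 \<le> W \<omega>"
    and W_dominates: "\<And>\<omega> i. \<omega> \<in> space M \<Longrightarrow> i \<in> {1..n} \<Longrightarrow> norm (Xs i \<omega>) \<le> W \<omega>"
  shows "expectation (max_psum n) \<le> 8 * t + 8 * expectation W"
proof -
  define pZ where "pZ u = prob {\<omega>\<in>space M. u < max_psum n \<omega>}" for u
  define pW where "pW u = prob {\<omega>\<in>space M. u < W \<omega>}" for u
  define I where "I u = (indicator {0..} u :: real)" for u :: real
  have [measurable]: "pZ \<in> borel_measurable borel" "pW \<in> borel_measurable borel"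
    "I \<in> borel_measurable borel"
    unfolding pZ_def pW_def I_def by measurable
  have nonneg: "0 \<le> pZ u" "0 \<le> pW u" "0 \<le> I u" for u
    unfolding pZ_def pW_def I_def by auto
  have layer_cake: "ennreal (expectation Y) = (\<integral>\<^sup>+u. ennreal (prob {\<omega>\<in>space M. u < Y \<omega>} * I u) \<partial>lborel)"
    if [measurable]: "Y \<in> borel_measurable M" and "integrable M Y" "\<And>\<omega>. 0 \<le> Y \<omega>" for Y
    unfolding I_def nn_integral_layer_cake_prob[OF that(1), symmetric]
    using that by (intro nn_integral_eq_integral[symmetric]) auto
  have "ennreal (expectation (max_psum n) / 4) =
        (\<integral>\<^sup>+u. ennreal (prob {\<omega>\<in>space M. u < max_psum n \<omega> / 4} * I u) \<partial>lborel)"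
    using layer_cake[of "\<lambda>\<omega>. max_psum n \<omega> / 4"] integrable_max_psum by (simp add: max_psum_nonneg)
  also have "\<dots> \<le> (\<integral>\<^sup>+u. ennreal (indicator {0..<t} u) + ennreal (pZ u * I u) * ennreal (1/8) +
                          ennreal (pW u * I u) \<partial>lborel)"
  proof (rule nn_integral_mono)
    fix u
    have "prob {\<omega>\<in>space M. u < max_psum n \<omega> / 4} * I u \<le> indicator {0..<t} u + pZ u * I u / 8 + pW u * I u"
      using prob_quarter_max_psum_gt_le[OF assms(1,2) _ assms(3) W_dominates, of u]
      unfolding pZ_def pW_def I_def by (auto simp: indicator_def)
    then show "ennreal (prob {\<omega>\<in>space M. u < max_psum n \<omega> / 4} * I u) \<le>
               ennreal (indicator {0..<t} u) + ennreal (pZ u * I u) * ennreal (1/8) + ennreal (pW u * I u)"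
      using nonneg[of u]
      by (simp add: ennreal_plus[symmetric] ennreal_mult[symmetric] ennreal_leI del: ennreal_plus)
  qed
  also have "\<dots> = (\<integral>\<^sup>+u. ennreal (indicator {0..<t} u) \<partial>lborel) +
      (\<integral>\<^sup>+u. ennreal (pZ u * I u) \<partial>lborel) * ennreal (1/8) + (\<integral>\<^sup>+u. ennreal (pW u * I u) \<partial>lborel)"
    by (simp add: nn_integral_add nn_integral_multc)
  also have "(\<integral>\<^sup>+u. ennreal (indicator {0..<t} u) \<partial>lborel) = ennreal t"
    using assms(1) by (simp add: ennreal_indicator)
  also have "(\<integral>\<^sup>+u. ennreal (pZ u * I u) \<partial>lborel) = ennreal (expectation (max_psum n))"
    unfolding pZ_def using integrable_max_psum max_psum_nonneg by (intro layer_cake[symmetric]) auto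
  also have "(\<integral>\<^sup>+u. ennreal (pW u * I u) \<partial>lborel) = ennreal (expectation W)"
    unfolding pW_def using assms(4) W_nonneg by (intro layer_cake[symmetric]) auto
  finally have "expectation (max_psum n) / 4 \<le> t + expectation (max_psum n) / 8 + expectation W"
    using assms(1) W_nonneg max_psum_nonneg
    by (simp add: ennreal_plus[symmetric] ennreal_mult[symmetric] ennreal_le_iff add_nonneg_nonneg
        Bochner_Integration.integral_nonneg del: ennreal_plus)
  then show ?thesis
    by linarith
qed

lemma expectation_norm_partial_sum_le:
  assumes "0 \<le> K"
    and small: "\<And>k. k \<in> {1..n} \<Longrightarrow> prob {\<omega>\<in>space M. K < norm (partial_sum Xs k \<omega>)} \<le> 1/32"
    and "W \<in> borel_measurable M" "integrable M W" "\<And>\<omega>. 0 \<le> W \<omega>"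
    and "\<And>\<omega> i. \<omega> \<in> space M \<Longrightarrow> i \<in> {1..n} \<Longrightarrow> norm (Xs i \<omega>) \<le> W \<omega>"
  shows "expectation (\<lambda>\<omega>. norm (partial_sum Xs n \<omega>)) \<le> 32 * K + 8 * expectation W"
proof (cases "n = 0")
  case True
  then show ?thesis
    using assms by (simp add: Bochner_Integration.integral_nonneg)
next
  case False
  then have n: "n \<in> {1..n}"
    by simp
  have "prob {\<omega>\<in>space M. 2 * K < norm (partial_sum Xs n \<omega> - partial_sum Xs k \<omega>)} \<le> 1/16"
    if k: "k \<in> {1..n}" for k
  proof -
    have "{\<omega>\<in>space M. 2 * K < norm (partial_sum Xs n \<omega> - partial_sum Xs k \<omega>)} \<subseteq>
          {\<omega>\<in>space M. K < norm (partial_sum Xs n \<omega>)} \<union> {\<omega>\<in>space M. K < norm (partial_sum Xs k \<omega>)}"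
    proof
      fix \<omega> assume "\<omega> \<in> {\<omega>\<in>space M. 2 * K < norm (partial_sum Xs n \<omega> - partial_sum Xs k \<omega>)}"
      moreover have "norm (partial_sum Xs n \<omega> - partial_sum Xs k \<omega>) \<le>
                     norm (partial_sum Xs n \<omega>) + norm (partial_sum Xs k \<omega>)"
        by (rule norm_triangle_ineq4)
      ultimately show "\<omega> \<in> {\<omega>\<in>space M. K < norm (partial_sum Xs n \<omega>)} \<union> {\<omega>\<in>space M. K < norm (partial_sum Xs k \<omega>)}"
        by auto
    qed
    then have "prob {\<omega>\<in>space M. 2 * K < norm (partial_sum Xs n \<omega> - partial_sum Xs k \<omega>)} \<le>
          prob ({\<omega>\<in>space M. K < norm (partial_sum Xs n \<omega>)} \<union> {\<omega>\<in>space M. K < norm (partial_sum Xs k \<omega>)})"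
      by (rule finite_measure_mono) measurable
    also have "\<dots> \<le> prob {\<omega>\<in>space M. K < norm (partial_sum Xs n \<omega>)} +
                     prob {\<omega>\<in>space M. K < norm (partial_sum Xs k \<omega>)}"
      by (rule measure_subadditive) measurable
    finally show ?thesis
      using small[OF n] small[OF k] by simp
  qed
  then have "(1 - 1/16) * prob {\<omega>\<in>space M. 2 * K + 2 * K < max_psum n \<omega>} \<le>
             prob {\<omega>\<in>space M. 2 * K < norm (partial_sum Xs n \<omega>)}"
    using assms(1) by (intro ottaviani_inequality) auto
  also have "\<dots> \<le> prob {\<omega>\<in>space M. K < norm (partial_sum Xs n \<omega>)}"
    using assms(1) by (intro finite_measure_mono) auto
  also have "\<dots> \<le> 1/32"
    by (rule small[OF n])
  finally have "expectation (max_psum n) \<le> 8 * (4 * K) + 8 * expectation W"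
    using assms(1) by (intro expectation_max_psum_le assms(3-)) auto
  moreover have "expectation (\<lambda>\<omega>. norm (partial_sum Xs n \<omega>)) \<le> expectation (max_psum n)"
    by (intro integral_mono integrable_norm integrable_partial_sum integrable_max_psum
        norm_partial_sum_le_max_psum) auto
  ultimately show ?thesis
    by simp
qed

end

locale iid_seq = prob_space M for M :: "'a measure" +
  fixes X :: "'a \<Rightarrow> 'b::{banach, second_countable_topology}"
    and Xs :: "nat \<Rightarrow> 'a \<Rightarrow> 'b"
  assumes X_measurable[measurable]: "X \<in> borel_measurable M"
    and Xs_measurable: "\<And>i. i \<ge> 1 \<Longrightarrow> Xs i \<in> borel_measurable M"
    and Xs_indep: "indep_vars (\<lambda>_. borel) Xs {1..}"
    and Xs_distr: "\<And>i. i \<ge> 1 \<Longrightarrow> distr M borel (Xs i) = distr M borel X"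
    and X_integrable: "integrable M X"

sublocale iid_seq \<subseteq> indep_seq M Xs
proof unfold_locales
  fix i :: nat assume "i \<ge> 1"
  have "integrable (distr M borel (Xs i)) (\<lambda>x. x) \<longleftrightarrow> integrable M (Xs i)"
    using Xs_measurable[OF \<open>i \<ge> 1\<close>] by (intro integrable_distr_eq) auto
  moreover have "integrable (distr M borel X) (\<lambda>x. x) \<longleftrightarrow> integrable M X"
    by (intro integrable_distr_eq) auto
  ultimately show "integrable M (Xs i)"
    using Xs_distr[OF \<open>i \<ge> 1\<close>] X_integrable by simp
qed (fact Xs_measurable Xs_indep)+

context iid_seq
begin

definition tail_mean :: "real \<Rightarrow> real" where
  "tail_mean r = expectation (\<lambda>\<omega>. if r < norm (X \<omega>) then norm (X \<omega>) else 0)"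

lemma expectation_norm_partial_sum_le_tail_mean:
  assumes "0 \<le> K" "0 \<le> r"
    and "\<And>k. k \<in> {1..n} \<Longrightarrow> prob {\<omega>\<in>space M. K < norm (partial_sum Xs k \<omega>)} \<le> 1/32"
  shows "expectation (\<lambda>\<omega>. norm (partial_sum Xs n \<omega>)) \<le> 32 * K + 8 * (r + real n * tail_mean r)"
proof -
  define f where "f y = (if r < norm y then norm y else 0)" for y :: 'b
  have [measurable]: "f \<in> borel_measurable borel"
    unfolding f_def by measurable
  have f_integrable: "integrable M (\<lambda>\<omega>. f (Xs i \<omega>))" if "i \<ge> 1" for i
  proof (rule Bochner_Integration.integrable_bound[OF integrable_norm[OF Xs_integrable[OF that]]])
    show "(\<lambda>\<omega>. f (Xs i \<omega>)) \<in> borel_measurable M"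
      using Xs_measurable[OF that] by measurable
  qed (auto simp: f_def)
  define W where "W \<omega> = r + (\<Sum>i\<in>{1..n}. f (Xs i \<omega>))" for \<omega>
  have W_nonneg: "0 \<le> W \<omega>" for \<omega>
    unfolding W_def f_def using assms(2) by (auto intro!: add_nonneg_nonneg sum_nonneg)
  have "norm (Xs i \<omega>) \<le> W \<omega>" if "i \<in> {1..n}" for i \<omega>
  proof -
    have "f (Xs i \<omega>) \<le> (\<Sum>i\<in>{1..n}. f (Xs i \<omega>))"
      using that by (intro member_le_sum) (auto simp: f_def)
    then show ?thesis
      using W_nonneg[of \<omega>] assms(2) by (auto simp: W_def f_def split: if_splits)
  qed
  moreover have "integrable M W"
    unfolding W_def by (intro Bochner_Integration.integrable_add Bochner_Integration.integrable_sum f_integrable) auto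
  moreover have "W \<in> borel_measurable M"
    using borel_measurable_integrable[OF \<open>integrable M W\<close>] .
  ultimately have "expectation (\<lambda>\<omega>. norm (partial_sum Xs n \<omega>)) \<le> 32 * K + 8 * expectation W"
    using assms W_nonneg by (intro expectation_norm_partial_sum_le) auto
  also have "expectation W = r + (\<Sum>i\<in>{1..n}. expectation (\<lambda>\<omega>. f (Xs i \<omega>)))"
    unfolding W_def using f_integrable
    by (subst Bochner_Integration.integral_add)
       (auto intro!: Bochner_Integration.integrable_sum simp: Bochner_Integration.integral_sum prob_space)
  also have "(\<Sum>i\<in>{1..n}. expectation (\<lambda>\<omega>. f (Xs i \<omega>))) = real n * tail_mean r"
  proof -
    have "expectation (\<lambda>\<omega>. f (Xs i \<omega>)) = tail_mean r" if "i \<in> {1..n}" for i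
    proof -
      have "integral\<^sup>L (distr M borel (Xs i)) f = integral\<^sup>L (distr M borel X) f"
        using that by (simp add: Xs_distr)
      then show ?thesis
        using that Xs_measurable[of i] by (simp add: integral_distr tail_mean_def f_def)
    qed
    then show ?thesis
      by simp
  qed
  finally show ?thesis .
qed

end

section \<open>Regularly growing normalizing sequences\<close>

locale normalizing_seq =
  fixes c :: "nat \<Rightarrow> real"
  assumes c_pos: "\<And>n. n \<ge> 1 \<Longrightarrow> c n > 0"
    and c_div_sqrt_mono_Suc: "\<And>n. n \<ge> 1 \<Longrightarrow> c n / sqrt (real n) \<le> c (Suc n) / sqrt (real (Suc n))"
    and c_regular: "\<forall>\<epsilon>>0. \<exists>m\<^sub>\<epsilon>\<ge>1. \<forall>m n. m\<^sub>\<epsilon> \<le> m \<and> m < n \<longrightarrow> c n / c m \<le> (1 + \<epsilon>) * (real n / real m)"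
begin

lemma c_div_sqrt_mono:
  assumes "1 \<le> m" "m \<le> n"
  shows "c m / sqrt m \<le> c n / sqrt n"
  using assms(2)
proof (induction n rule: dec_induct)
  case (step n)
  then show ?case
    using assms(1) c_div_sqrt_mono_Suc[of n] by simp
qed simp

lemma c_ge_sqrt: "n \<ge> 1 \<Longrightarrow> c 1 * sqrt n \<le> c n"
  using c_div_sqrt_mono[of 1 n] by (simp add: field_simps)

lemma c_mono: "1 \<le> m \<Longrightarrow> m \<le> n \<Longrightarrow> c m \<le> c n"
proof -
  assume mn: "1 \<le> m" "m \<le> n"
  have "c m = c m / sqrt m * sqrt m"
    using mn by simp
  also have "\<dots> \<le> c n / sqrt n * sqrt n"
    using mn c_pos[of n] c_div_sqrt_mono[OF mn]
    by (intro mult_mono) auto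
  also have "\<dots> = c n"
    using mn by simp
  finally show ?thesis .
qed

lemma filterlim_c_at_top: "filterlim c at_top sequentially"
proof (rule filterlim_at_top_mono)
  show "filterlim (\<lambda>n. c 1 * sqrt (real n)) at_top sequentially"
    using c_pos[of 1]
    by (intro filterlim_tendsto_pos_mult_at_top[OF tendsto_const]
        filterlim_compose[OF sqrt_at_top filterlim_real_sequentially]) auto
  show "eventually (\<lambda>n. c 1 * sqrt (real n) \<le> c n) sequentially"
    using eventually_ge_at_top[of 1] by eventually_elim (rule c_ge_sqrt)
qed

lemma c_regular_2:
  obtains m\<^sub>0 where "m\<^sub>0 \<ge> 1" "\<And>m n. m\<^sub>0 \<le> m \<Longrightarrow> m < n \<Longrightarrow> c n / c m \<le> 2 * (real n / real m)"
  using c_regular by (metis one_add_one zero_less_one)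

lemma exists_index_below_scaled:
  assumes "0 < \<delta>" "\<delta> \<le> 1" "n \<ge> 1" "2 \<le> \<delta>\<^sup>2 * n"
  shows "\<exists>p\<ge>1. c p \<le> \<delta> * c n \<and> real n \<le> 2 / \<delta>\<^sup>2 * real p"
proof (intro exI conjI)
  define p where "p = nat \<lfloor>\<delta>\<^sup>2 * n\<rfloor>"
  have p_le: "real p \<le> \<delta>\<^sup>2 * n" and p_gt: "\<delta>\<^sup>2 * n - 1 < real p"
    using assms(4) by (simp_all add: p_def)
  then show "p \<ge> 1"
    using assms(4) by linarith
  have "\<delta>\<^sup>2 * n \<le> n"
    using assms(1,2) by (simp add: mult_left_le_one_le power_le_one)
  then have "p \<le> n"
    using p_le by linarith
  have "sqrt p \<le> \<delta> * sqrt n"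
    using p_le assms(1) real_sqrt_le_mono[OF p_le] by (simp add: real_sqrt_mult)
  then have "c p / sqrt p * sqrt p \<le> c n / sqrt n * (\<delta> * sqrt n)"
    using \<open>p \<ge> 1\<close> \<open>p \<le> n\<close> c_pos[of n] assms(3)
    by (intro mult_mono c_div_sqrt_mono) auto
  then show "c p \<le> \<delta> * c n"
    using \<open>p \<ge> 1\<close> assms(3) by (simp add: mult.commute)
  have "\<delta>\<^sup>2 * n \<le> 2 * real p"
    using p_gt assms(4) by linarith
  then show "real n \<le> 2 / \<delta>\<^sup>2 * real p"
    using assms(1) by (simp add: field_simps)
qed

lemma exists_index_below_regular:
  assumes "n \<ge> 1" and reg: "\<And>p. n < p \<Longrightarrow> c p / c n \<le> 2 * (real p / real n)" and "c n \<le> y"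
  shows "\<exists>p\<ge>1. c p \<le> y \<and> real n * y / c n \<le> 4 * real p"
proof -
  define S where "S = {k. 1 \<le> k \<and> c k \<le> y}"
  obtain K where "\<And>k. k \<ge> K \<Longrightarrow> y < c k"
    using filterlim_c_at_top unfolding filterlim_at_top_dense eventually_sequentially by blast
  then have "S \<subseteq> {..<K}"
    unfolding S_def by (auto simp: not_less[symmetric])
  then have "finite S"
    by (rule finite_subset) simp
  define p where "p = Max S"
  have "n \<in> S"
    unfolding S_def using assms by simp
  then have p: "p \<in> S" "n \<le> p"
    unfolding p_def using \<open>finite S\<close> by (auto intro: Max_in)
  have "Suc p \<notin> S"
    unfolding p_def using \<open>finite S\<close> by (metis Max_ge Suc_n_not_le_n)
  then have "y < c (Suc p)"
    unfolding S_def by auto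
  have cn: "0 < c n"
    using c_pos assms(1) by simp
  have "real n * y / c n \<le> real n * c (Suc p) / c n"
    using \<open>y < c (Suc p)\<close> cn by (intro divide_right_mono mult_left_mono) auto
  also have "\<dots> \<le> real n * (2 * (real (Suc p) / real n) * c n) / c n"
    using reg[of "Suc p"] p(2) cn by (intro divide_right_mono mult_left_mono) (auto simp: divide_le_eq)
  also have "\<dots> = 2 * real (Suc p)"
    using cn assms(1) by simp
  also have "\<dots> \<le> 4 * real p"
    using p(1) unfolding S_def by simp
  finally show ?thesis
    using p(1) unfolding S_def by blast
qed

text \<open>Both growth conditions on \<open>c\<close> enter here: the monotonicity of \<open>c n / sqrt n\<close>
  when \<open>y \<le> c n\<close>, and the regularity when \<open>y > c n\<close>.\<close>

lemma exists_index_below: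
  assumes "0 < \<delta>" "n \<ge> 1" "2 \<le> \<delta>\<^sup>2 * n"
    and reg: "\<And>p. n < p \<Longrightarrow> c p / c n \<le> 2 * (real p / real n)" and "\<delta> * c n < y"
  shows "\<exists>p\<ge>1. c p \<le> y \<and> real n * y / c n \<le> (4 + 2 / \<delta>\<^sup>2) * real p"
proof (cases "y \<le> c n")
  case True
  have cn: "0 < c n"
    using c_pos assms(2) by simp
  have "\<delta> * c n < 1 * c n"
    using assms(5) True by simp
  then have "\<delta> \<le> 1"
    using cn by (auto dest: mult_right_less_imp_less)
  then obtain p where "p \<ge> 1" "c p \<le> \<delta> * c n" "real n \<le> 2 / \<delta>\<^sup>2 * real p"
    using exists_index_below_scaled assms(1-3) by blast
  moreover have "real n * y / c n \<le> real n"
    using True cn by (simp add: divide_le_eq mult_left_mono)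
  moreover have "2 / \<delta>\<^sup>2 * real p \<le> (4 + 2 / \<delta>\<^sup>2) * real p"
    by (intro mult_right_mono) auto
  ultimately show ?thesis
    using assms(5) by (intro exI[of _ p]) auto
next
  case False
  have "\<exists>p\<ge>1. c p \<le> y \<and> real n * y / c n \<le> 4 * real p"
    by (rule exists_index_below_regular[OF assms(2)]) (use False reg in auto)
  then obtain p where "p \<ge> 1" "c p \<le> y" "real n * y / c n \<le> 4 * real p"
    by blast
  then show ?thesis
    by (intro exI[of _ p]) (auto intro: order_trans mult_right_mono)
qed

definition count_below :: "real \<Rightarrow> ennreal" where
  "count_below y = (\<Sum>k. indicator {c (Suc k)..} y)"

lemma borel_measurable_count_below[measurable]: "count_below \<in> borel_measurable borel"
  unfolding count_below_def by measurable

lemma of_nat_le_count_below: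
  assumes "p \<ge> 1" "c p \<le> y"
  shows "of_nat p \<le> count_below y"
proof -
  have "c (Suc k) \<le> y" if "k < p" for k
    using that assms c_mono[of "Suc k" p] by simp
  then have "(\<Sum>k<p. indicator {c (Suc k)..} y :: ennreal) = (\<Sum>k<p. 1)"
    by (intro sum.cong) (auto simp: indicator_def)
  then have "of_nat p = (\<Sum>k<p. indicator {c (Suc k)..} y :: ennreal)"
    by simp
  also have "\<dots> \<le> count_below y"
    unfolding count_below_def by (rule sum_le_suminf) auto
  finally show ?thesis .
qed

lemma nn_integral_count_below_finite:
  assumes "prob_space M" and [measurable]: "Y \<in> borel_measurable M"
    and "summable (\<lambda>k. measure M {\<omega>\<in>space M. c (Suc k) \<le> Y \<omega>})"
  shows "(\<integral>\<^sup>+\<omega>. count_below (Y \<omega>) \<partial>M) < \<infinity>"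
proof -
  interpret prob_space M by fact
  have "(\<integral>\<^sup>+\<omega>. count_below (Y \<omega>) \<partial>M) = (\<Sum>k. \<integral>\<^sup>+\<omega>. indicator {c (Suc k)..} (Y \<omega>) \<partial>M)"
    unfolding count_below_def by (rule nn_integral_suminf) measurable
  also have "\<dots> = (\<Sum>k. ennreal (prob {\<omega>\<in>space M. c (Suc k) \<le> Y \<omega>}))"
  proof (intro suminf_cong)
    fix k
    have "(\<integral>\<^sup>+\<omega>. indicator {c (Suc k)..} (Y \<omega>) \<partial>M) = (\<integral>\<^sup>+\<omega>. indicator {\<omega>\<in>space M. c (Suc k) \<le> Y \<omega>} \<omega> \<partial>M)"
      by (intro nn_integral_cong) (auto simp: indicator_def)
    then show "(\<integral>\<^sup>+\<omega>. indicator {c (Suc k)..} (Y \<omega>) \<partial>M) = ennreal (prob {\<omega>\<in>space M. c (Suc k) \<le> Y \<omega>})"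
      by (simp add: emeasure_eq_measure)
  qed
  also have "\<dots> = ennreal (\<Sum>k. prob {\<omega>\<in>space M. c (Suc k) \<le> Y \<omega>})"
    using assms(3) by (intro suminf_ennreal2) auto
  finally show ?thesis
    by simp
qed

lemma tail_ratio_le_count_below:
  assumes "0 < \<delta>" "n \<ge> 1" "2 \<le> \<delta>\<^sup>2 * n"
    and "\<And>p. n < p \<Longrightarrow> c p / c n \<le> 2 * (real p / real n)"
  shows "ennreal (real n * (if \<delta> * c n < y then y else 0) / c n) \<le>
         (if \<delta> * c n < y then ennreal (4 + 2 / \<delta>\<^sup>2) * count_below y else 0)"
proof (cases "\<delta> * c n < y")
  case True
  then obtain p where "p \<ge> 1" "c p \<le> y" "real n * y / c n \<le> (4 + 2 / \<delta>\<^sup>2) * real p"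
    using exists_index_below[OF assms] by blast
  then have "ennreal (real n * y / c n) \<le> ennreal ((4 + 2 / \<delta>\<^sup>2) * real p)"
    by (intro ennreal_leI)
  also have "\<dots> = ennreal (4 + 2 / \<delta>\<^sup>2) * of_nat p"
    by (subst ennreal_mult) (auto simp: ennreal_of_nat_eq_real_of_nat)
  also have "\<dots> \<le> ennreal (4 + 2 / \<delta>\<^sup>2) * count_below y"
    by (intro mult_left_mono of_nat_le_count_below \<open>p \<ge> 1\<close> \<open>c p \<le> y\<close>) simp
  finally show ?thesis
    using True by simp
qed simp

lemma eventually_tail_ratio_le_count_below:
  assumes "0 < \<delta>"
  shows "eventually (\<lambda>n. \<forall>y. ennreal (real n * (if \<delta> * c n < y then y else 0) / c n) \<le>
                          (if \<delta> * c n < y then ennreal (4 + 2 / \<delta>\<^sup>2) * count_below y else 0)) sequentially"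
proof -
  obtain m\<^sub>0 where "m\<^sub>0 \<ge> 1" and reg: "\<And>m n. m\<^sub>0 \<le> m \<Longrightarrow> m < n \<Longrightarrow> c n / c m \<le> 2 * (real n / real m)"
    using c_regular_2 by blast
  have "eventually (\<lambda>n. 2 / \<delta>\<^sup>2 \<le> real n) sequentially"
    using filterlim_real_sequentially by (simp add: filterlim_at_top)
  then show ?thesis
    using eventually_ge_at_top[of m\<^sub>0]
  proof eventually_elim
    case (elim n)
    then have "2 \<le> \<delta>\<^sup>2 * n"
      using assms by (simp add: field_simps)
    then show ?case
      using elim \<open>m\<^sub>0 \<ge> 1\<close> assms by (intro allI tail_ratio_le_count_below reg) auto
  qed
qed

lemma nn_integral_tail_ratio_tendsto_zero:
  assumes "prob_space M" and [measurable]: "Y \<in> borel_measurable M"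
    and summable: "summable (\<lambda>k. measure M {\<omega>\<in>space M. c (Suc k) \<le> Y \<omega>})" and "0 < \<delta>"
  shows "(\<lambda>n. \<integral>\<^sup>+\<omega>. ennreal (real n * (if \<delta> * c n < Y \<omega> then Y \<omega> else 0) / c n) \<partial>M) \<longlonglongrightarrow> 0"
proof -
  define C where "C = ennreal (4 + 2 / \<delta>\<^sup>2)"
  define u where "u n \<omega> = (if \<delta> * c n < Y \<omega> then C * count_below (Y \<omega>) else 0)" for n \<omega>
  have "(\<lambda>n. \<integral>\<^sup>+\<omega>. u n \<omega> \<partial>M) \<longlonglongrightarrow> (\<integral>\<^sup>+\<omega>. 0 \<partial>M)"
  proof (rule nn_integral_dominated_convergence[where w = "\<lambda>\<omega>. C * count_below (Y \<omega>)"])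
    show "(\<integral>\<^sup>+\<omega>. C * count_below (Y \<omega>) \<partial>M) < \<infinity>"
      using nn_integral_count_below_finite[OF assms(1,2) summable]
      by (simp add: C_def nn_integral_cmult ennreal_mult_less_top)
    show "AE \<omega> in M. (\<lambda>n. u n \<omega>) \<longlonglongrightarrow> 0"
    proof (intro AE_I2)
      fix \<omega>
      have "eventually (\<lambda>n. Y \<omega> / \<delta> < c n) sequentially"
        using filterlim_c_at_top unfolding filterlim_at_top_dense by blast
      then have "eventually (\<lambda>n. u n \<omega> = 0) sequentially"
        by eventually_elim (use \<open>0 < \<delta>\<close> in \<open>auto simp: u_def field_simps\<close>)
      then show "(\<lambda>n. u n \<omega>) \<longlonglongrightarrow> 0"
        by (rule tendsto_eventually)
    qed
  qed (auto simp: u_def)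
  then have u_lim: "(\<lambda>n. \<integral>\<^sup>+\<omega>. u n \<omega> \<partial>M) \<longlonglongrightarrow> 0"
    by simp
  show ?thesis
  proof (rule tendsto_sandwich[OF _ _ tendsto_const u_lim])
    show "eventually (\<lambda>n. (\<integral>\<^sup>+\<omega>. ennreal (real n * (if \<delta> * c n < Y \<omega> then Y \<omega> else 0) / c n) \<partial>M) \<le>
                         (\<integral>\<^sup>+\<omega>. u n \<omega> \<partial>M)) sequentially"
      using eventually_tail_ratio_le_count_below[OF \<open>0 < \<delta>\<close>]
      unfolding u_def C_def by eventually_elim (intro nn_integral_mono, blast)
  qed simp
qed

lemma tail_ratio_tendsto_zero:
  assumes "prob_space M" and [measurable]: "Y \<in> borel_measurable M"
    and Y_nonneg: "\<And>\<omega>. 0 \<le> Y \<omega>" and "integrable M Y"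
    and "summable (\<lambda>k. measure M {\<omega>\<in>space M. c (Suc k) \<le> Y \<omega>})" and "0 < \<delta>"
  shows "(\<lambda>n. real n * (\<integral>\<omega>. (if \<delta> * c n < Y \<omega> then Y \<omega> else 0) \<partial>M) / c n) \<longlonglongrightarrow> 0"
proof -
  define g where "g n \<omega> = real n * (if \<delta> * c n < Y \<omega> then Y \<omega> else 0) / c n" for n \<omega>
  have g_nonneg: "0 \<le> g n \<omega>" if "n \<ge> 1" for n \<omega>
    using c_pos[OF that] Y_nonneg[of \<omega>] unfolding g_def by auto
  have g_integrable: "integrable M (g n)" for n
  proof -
    have "integrable M (\<lambda>\<omega>. if \<delta> * c n < Y \<omega> then Y \<omega> else 0)"
      by (rule Bochner_Integration.integrable_bound[OF \<open>integrable M Y\<close>]) (auto simp: Y_nonneg)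
    then show ?thesis
      unfolding g_def by (intro integrable_divide integrable_mult_right)
  qed
  have "(\<lambda>n. \<integral>\<^sup>+\<omega>. ennreal (g n \<omega>) \<partial>M) \<longlonglongrightarrow> 0"
    unfolding g_def using assms by (intro nn_integral_tail_ratio_tendsto_zero) auto
  moreover have "eventually (\<lambda>n. (\<integral>\<^sup>+\<omega>. ennreal (g n \<omega>) \<partial>M) = ennreal (integral\<^sup>L M (g n))) sequentially"
    using eventually_ge_at_top[of 1]
    by eventually_elim (use g_nonneg in \<open>auto intro: nn_integral_eq_integral[OF g_integrable]\<close>)
  ultimately have "(\<lambda>n. ennreal (integral\<^sup>L M (g n))) \<longlonglongrightarrow> ennreal 0"
    using Lim_transform_eventually by fastforce
  moreover have "eventually (\<lambda>n. 0 \<le> integral\<^sup>L M (g n)) sequentially"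
    using eventually_ge_at_top[of 1]
    by eventually_elim (use g_nonneg in \<open>auto intro: Bochner_Integration.integral_nonneg\<close>)
  ultimately have "(\<lambda>n. integral\<^sup>L M (g n)) \<longlonglongrightarrow> 0"
    by (intro tendsto_ennrealD) auto
  then show ?thesis
    unfolding g_def by simp
qed

end

section \<open>Moments versus probabilities of normalized sums\<close>

locale iid_normalized_sums = iid_seq M X Xs + normalizing_seq c
  for M :: "'a measure" and X :: "'a \<Rightarrow> 'b::{banach, second_countable_topology}" and Xs c +
  assumes tail_summable: "summable (\<lambda>n. measure M {\<omega>\<in>space M. norm (X \<omega>) \<ge> c (Suc n)})"
begin

lemma tail_mean_ratio_tendsto_zero:
  assumes "0 < \<delta>"
  shows "(\<lambda>n. real n * tail_mean (\<delta> * c n) / c n) \<longlonglongrightarrow> 0"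
  unfolding tail_mean_def
  using tail_summable assms integrable_norm[OF X_integrable]
  by (intro tail_ratio_tendsto_zero[OF prob_space_axioms]) auto

lemma scaled_partial_sum_gt_iff:
  assumes "n \<ge> 1"
  shows "K < norm (scaleR (1 / c n) (partial_sum Xs n \<omega>)) \<longleftrightarrow> K * c n < norm (partial_sum Xs n \<omega>)"
  using c_pos[OF assms] by (simp add: pos_less_divide_eq)

lemma prob_scaled_partial_sum_gt_le:
  assumes "n \<ge> 1" "0 < K"
  shows "prob {\<omega>\<in>space M. K < norm (scaleR (1 / c n) (partial_sum Xs n \<omega>))} \<le>
         expectation (\<lambda>\<omega>. norm (partial_sum Xs n \<omega>)) / c n / K"
  using prob_norm_partial_sum_gt_le[of "K * c n" n] c_pos[OF assms(1)] assms(2)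
  by (simp add: scaled_partial_sum_gt_iff[OF assms(1)] field_simps)

lemma mean_ratio_nonneg: "0 \<le> expectation (\<lambda>\<omega>. norm (partial_sum Xs n \<omega>)) / c n"
  using c_pos[of n] by (cases "n = 0") (auto intro: Bochner_Integration.integral_nonneg)

lemma eventually_mean_ratio_le:
  assumes "0 < \<delta>"
    and small: "eventually (\<lambda>n. \<forall>k\<in>{1..n}. prob {\<omega>\<in>space M. \<delta> * c n < norm (partial_sum Xs k \<omega>)} \<le> 1/32)
                  sequentially"
  shows "eventually (\<lambda>n. expectation (\<lambda>\<omega>. norm (partial_sum Xs n \<omega>)) / c n \<le> 41 * \<delta>) sequentially"
proof -
  have "eventually (\<lambda>n. real n * tail_mean (\<delta> * c n) / c n < \<delta> / 8) sequentially"
    using order_tendstoD(2)[OF tail_mean_ratio_tendsto_zero[OF assms(1)], of "\<delta> / 8"] assms(1) by simp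
  with small eventually_ge_at_top[of 1] show ?thesis
  proof eventually_elim
    case (elim n)
    have cn: "0 < c n"
      using c_pos elim(2) by simp
    have "expectation (\<lambda>\<omega>. norm (partial_sum Xs n \<omega>)) \<le>
          32 * (\<delta> * c n) + 8 * (\<delta> * c n + real n * tail_mean (\<delta> * c n))"
      using elim(1) assms(1) cn by (intro expectation_norm_partial_sum_le_tail_mean) auto
    also have "\<dots> = (40 * \<delta> + 8 * (real n * tail_mean (\<delta> * c n) / c n)) * c n"
      using cn by (simp add: field_simps)
    also have "\<dots> \<le> 41 * \<delta> * c n"
      using elim(3) cn by (intro mult_right_mono) linarith+
    finally show ?case
      using cn by (simp add: divide_le_eq)
  qed
qed

lemma prob_norm_partial_sum_gt_le_scaled:
  assumes "k \<in> {1..n}" "K \<le> L" "0 \<le> L"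
  shows "prob {\<omega>\<in>space M. L * c n < norm (partial_sum Xs k \<omega>)} \<le>
         prob {\<omega>\<in>space M. K < norm (scaleR (1 / c k) (partial_sum Xs k \<omega>))}"
proof (rule finite_measure_mono)
  have "K * c k \<le> L * c n"
    using assms c_pos[of k] c_mono[of k n] by (intro mult_mono) auto
  moreover have "k \<ge> 1"
    using assms(1) by simp
  ultimately show "{\<omega>\<in>space M. L * c n < norm (partial_sum Xs k \<omega>)} \<subseteq>
                   {\<omega>\<in>space M. K < norm (scaleR (1 / c k) (partial_sum Xs k \<omega>))}"
    unfolding scaled_partial_sum_gt_iff[OF \<open>k \<ge> 1\<close>] by auto
qed simp

lemma prob_norm_partial_sum_gt_tendsto_zero:
  assumes "0 < \<delta>"
  shows "(\<lambda>n. prob {\<omega>\<in>space M. \<delta> * c n < norm (partial_sum Xs k \<omega>)}) \<longlonglongrightarrow> 0"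
proof (rule tendsto_sandwich[OF _ _ tendsto_const])
  have "filterlim (\<lambda>n. \<delta> * c n) at_top sequentially"
    using assms by (intro filterlim_tendsto_pos_mult_at_top[OF tendsto_const] filterlim_c_at_top)
  then have "eventually (\<lambda>n. 0 < \<delta> * c n) sequentially"
    by (simp add: filterlim_at_top_dense)
  then show "eventually (\<lambda>n. prob {\<omega>\<in>space M. \<delta> * c n < norm (partial_sum Xs k \<omega>)} \<le>
                             expectation (\<lambda>\<omega>. norm (partial_sum Xs k \<omega>)) / (\<delta> * c n)) sequentially"
    by eventually_elim (rule prob_norm_partial_sum_gt_le)
  show "(\<lambda>n. expectation (\<lambda>\<omega>. norm (partial_sum Xs k \<omega>)) / (\<delta> * c n)) \<longlonglongrightarrow> 0"
    using \<open>filterlim (\<lambda>n. \<delta> * c n) at_top sequentially\<close>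
    by (intro tendsto_divide_0[OF tendsto_const] filterlim_at_top_imp_at_infinity)
qed simp

lemma limsup_mean_ratio_finite_if_bounded_in_prob:
  assumes "bounded_in_prob M (\<lambda>n \<omega>. scaleR (1 / c n) (partial_sum Xs n \<omega>))"
  shows "limsup (\<lambda>n. ereal (expectation (\<lambda>\<omega>. norm (partial_sum Xs n \<omega>)) / c n)) < \<infinity>"
proof -
  obtain K where K: "\<And>k. k \<ge> 1 \<Longrightarrow> prob {\<omega>\<in>space M. K < norm (scaleR (1 / c k) (partial_sum Xs k \<omega>))} \<le> 1/32"
    using assms unfolding bounded_in_prob_def by (metis zero_less_divide_1_iff zero_less_numeral)
  have L: "K \<le> max K 1" "0 \<le> max K 1"
    by auto
  have "prob {\<omega>\<in>space M. max K 1 * c n < norm (partial_sum Xs k \<omega>)} \<le> 1/32" if "k \<in> {1..n}" for n k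
    using order_trans[OF prob_norm_partial_sum_gt_le_scaled[OF that L] K] that by simp
  then have "eventually (\<lambda>n. expectation (\<lambda>\<omega>. norm (partial_sum Xs n \<omega>)) / c n \<le> 41 * max K 1) sequentially"
    by (intro eventually_mean_ratio_le) auto
  then have "limsup (\<lambda>n. ereal (expectation (\<lambda>\<omega>. norm (partial_sum Xs n \<omega>)) / c n)) \<le> ereal (41 * max K 1)"
    by (intro Limsup_bounded) (auto elim: eventually_mono)
  then show ?thesis
    by (rule order.strict_trans1) simp
qed

lemma bounded_in_prob_if_limsup_mean_ratio_finite:
  assumes "limsup (\<lambda>n. ereal (expectation (\<lambda>\<omega>. norm (partial_sum Xs n \<omega>)) / c n)) < \<infinity>"
  shows "bounded_in_prob M (\<lambda>n \<omega>. scaleR (1 / c n) (partial_sum Xs n \<omega>))"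
  unfolding bounded_in_prob_def
proof (intro allI impI)
  fix \<epsilon> :: real assume "0 < \<epsilon>"
  obtain B where B: "\<And>n. expectation (\<lambda>\<omega>. norm (partial_sum Xs n \<omega>)) / c n \<le> B"
    using limsup_finite_then_bounded[OF assms] by blast
  define K where "K = (\<bar>B\<bar> + 1) / \<epsilon>"
  have "0 < K"
    using \<open>0 < \<epsilon>\<close> by (simp add: K_def)
  have "prob {\<omega>\<in>space M. K < norm (scaleR (1 / c n) (partial_sum Xs n \<omega>))} \<le> \<epsilon>" if "n \<ge> 1" for n
  proof -
    have "prob {\<omega>\<in>space M. K < norm (scaleR (1 / c n) (partial_sum Xs n \<omega>))} \<le>
          expectation (\<lambda>\<omega>. norm (partial_sum Xs n \<omega>)) / c n / K"
      by (rule prob_scaled_partial_sum_gt_le[OF that \<open>0 < K\<close>])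
    also have "\<dots> \<le> \<bar>B\<bar> / K"
      using B[of n] \<open>0 < K\<close> by (intro divide_right_mono) auto
    also have "\<dots> \<le> \<epsilon>"
      using \<open>0 < \<epsilon>\<close> by (simp add: K_def field_simps)
    finally show ?thesis .
  qed
  then show "\<exists>K. \<forall>n\<ge>1. measure M {\<omega>\<in>space M. K < norm (scaleR (1 / c n) (partial_sum Xs n \<omega>))} \<le> \<epsilon>"
    by blast
qed

lemma mean_ratio_tendsto_zero_if_tendsto_zero_in_prob:
  assumes "tendsto_zero_in_prob M (\<lambda>n \<omega>. scaleR (1 / c n) (partial_sum Xs n \<omega>))"
  shows "(\<lambda>n. expectation (\<lambda>\<omega>. norm (partial_sum Xs n \<omega>)) / c n) \<longlonglongrightarrow> 0"
proof (rule order_tendstoI)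
  fix r :: real assume "0 < r"
  define \<delta> where "\<delta> = r / 82"
  have "0 < \<delta>"
    using \<open>0 < r\<close> by (simp add: \<delta>_def)
  then have "(\<lambda>k. prob {\<omega>\<in>space M. \<delta> < norm (scaleR (1 / c k) (partial_sum Xs k \<omega>))}) \<longlonglongrightarrow> 0"
    using assms unfolding tendsto_zero_in_prob_def by blast
  from order_tendstoD(2)[OF this, of "1/32"]
  obtain N where N: "\<And>k. k \<ge> N \<Longrightarrow> prob {\<omega>\<in>space M. \<delta> < norm (scaleR (1 / c k) (partial_sum Xs k \<omega>))} < 1/32"
    by (auto simp: eventually_sequentially)
  have "eventually (\<lambda>n. prob {\<omega>\<in>space M. \<delta> * c n < norm (partial_sum Xs k \<omega>)} < 1/32) sequentially" for k
    using order_tendstoD(2)[OF prob_norm_partial_sum_gt_tendsto_zero[OF \<open>0 < \<delta>\<close>], of "1/32"] by simp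
  then have "eventually (\<lambda>n. \<forall>k\<in>{..<N}. prob {\<omega>\<in>space M. \<delta> * c n < norm (partial_sum Xs k \<omega>)} < 1/32) sequentially"
    by (intro eventually_ball_finite) auto
  then have "eventually (\<lambda>n. \<forall>k\<in>{1..n}. prob {\<omega>\<in>space M. \<delta> * c n < norm (partial_sum Xs k \<omega>)} \<le> 1/32) sequentially"
  proof eventually_elim
    case (elim n)
    show ?case
    proof
      fix k assume k: "k \<in> {1..n}"
      show "prob {\<omega>\<in>space M. \<delta> * c n < norm (partial_sum Xs k \<omega>)} \<le> 1/32"
      proof (cases "k < N")
        case False
        then show ?thesis
          using prob_norm_partial_sum_gt_le_scaled[OF k, of \<delta> \<delta>] N[of k] \<open>0 < \<delta>\<close> by simp
      qed (use bspec[OF elim, of k] in simp)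
    qed
  qed
  then have "eventually (\<lambda>n. expectation (\<lambda>\<omega>. norm (partial_sum Xs n \<omega>)) / c n \<le> 41 * \<delta>) sequentially"
    by (rule eventually_mean_ratio_le[OF \<open>0 < \<delta>\<close>])
  moreover have "41 * \<delta> < r"
    using \<open>0 < r\<close> by (simp add: \<delta>_def)
  ultimately show "eventually (\<lambda>n. expectation (\<lambda>\<omega>. norm (partial_sum Xs n \<omega>)) / c n < r) sequentially"
    by (auto elim: eventually_mono)
next
  fix r :: real assume "r < 0"
  then have "r < expectation (\<lambda>\<omega>. norm (partial_sum Xs n \<omega>)) / c n" for n
    using mean_ratio_nonneg[of n] by linarith
  then show "eventually (\<lambda>n. r < expectation (\<lambda>\<omega>. norm (partial_sum Xs n \<omega>)) / c n) sequentially"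
    by (intro always_eventually allI)
qed

lemma tendsto_zero_in_prob_if_mean_ratio_tendsto_zero:
  assumes "(\<lambda>n. expectation (\<lambda>\<omega>. norm (partial_sum Xs n \<omega>)) / c n) \<longlonglongrightarrow> 0"
  shows "tendsto_zero_in_prob M (\<lambda>n \<omega>. scaleR (1 / c n) (partial_sum Xs n \<omega>))"
  unfolding tendsto_zero_in_prob_def
proof (intro allI impI)
  fix \<epsilon> :: real assume "0 < \<epsilon>"
  show "(\<lambda>n. measure M {\<omega>\<in>space M. \<epsilon> < norm (scaleR (1 / c n) (partial_sum Xs n \<omega>))}) \<longlonglongrightarrow> 0"
  proof (rule tendsto_sandwich[OF _ _ tendsto_const])
    show "eventually (\<lambda>n. measure M {\<omega>\<in>space M. \<epsilon> < norm (scaleR (1 / c n) (partial_sum Xs n \<omega>))} \<le>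
                         expectation (\<lambda>\<omega>. norm (partial_sum Xs n \<omega>)) / c n / \<epsilon>) sequentially"
      using eventually_ge_at_top[of 1]
      by eventually_elim (rule prob_scaled_partial_sum_gt_le[OF _ \<open>0 < \<epsilon>\<close>])
    show "(\<lambda>n. expectation (\<lambda>\<omega>. norm (partial_sum Xs n \<omega>)) / c n / \<epsilon>) \<longlonglongrightarrow> 0"
      using tendsto_divide_zero[OF assms] .
  qed simp
qed

end

theorem lemma1:
  fixes M :: "'a measure"
    and X :: "'a \<Rightarrow> 'b::{banach, second_countable_topology}"
    and Xs :: "nat \<Rightarrow> 'a \<Rightarrow> 'b"
    and c :: "nat \<Rightarrow> real"
  assumes "prob_space M"
    and "X \<in> borel_measurable M"
    and "\<And>i. i \<ge> 1 \<Longrightarrow> Xs i \<in> borel_measurable M"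
    and "prob_space.indep_vars M (\<lambda>_. borel) Xs {1..}"
    and "\<And>i. i \<ge> 1 \<Longrightarrow> distr M borel (Xs i) = distr M borel X"
    and "integrable M X" and "integral\<^sup>L M X = 0"
    and "\<And>n. n \<ge> 1 \<Longrightarrow> c n > 0"
    and "\<And>n. n \<ge> 1 \<Longrightarrow> c n / sqrt (real n) \<le> c (Suc n) / sqrt (real (Suc n))"
    and "filterlim (\<lambda>n. c n / sqrt (real n)) at_top sequentially"
    and "\<forall>\<epsilon>>0. \<exists>m\<^sub>\<epsilon>\<ge>1. \<forall>m n. m\<^sub>\<epsilon> \<le> m \<and> m < n \<longrightarrow>
            c n / c m \<le> (1 + \<epsilon>) * (real n / real m)"
    and "summable (\<lambda>n. measure M {\<omega>\<in>space M. norm (X \<omega>) \<ge> c (Suc n)})"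
  shows "(bounded_in_prob M (\<lambda>n \<omega>. scaleR (1 / c n) (partial_sum Xs n \<omega>)) \<longleftrightarrow>
            limsup (\<lambda>n. ereal ((\<integral>\<omega>. norm (partial_sum Xs n \<omega>) \<partial>M) / c n)) < \<infinity>)
       \<and> (tendsto_zero_in_prob M (\<lambda>n \<omega>. scaleR (1 / c n) (partial_sum Xs n \<omega>)) \<longleftrightarrow>
            (\<lambda>n. (\<integral>\<omega>. norm (partial_sum Xs n \<omega>) \<partial>M) / c n) \<longlonglongrightarrow> 0)"
proof -
  interpret iid_normalized_sums M X Xs c
    by (intro iid_normalized_sums.intro iid_seq.intro iid_seq_axioms.intro normalizing_seq.intro
        iid_normalized_sums_axioms.intro) (fact assms)+
  show ?thesis
    using limsup_mean_ratio_finite_if_bounded_in_prob bounded_in_prob_if_limsup_mean_ratio_finite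
      mean_ratio_tendsto_zero_if_tendsto_zero_in_prob tendsto_zero_in_prob_if_mean_ratio_tendsto_zero
    by blast
qed

end
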